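(* Let $G=(V,E)$ be a finite directed graph and let there be $k$ players; player $i\in\{1,\dots,k\}$ has a source–sink pair $(s_i,t_i)$ of vertices of $G$ and a flow amount $r_i>0$, and must route all of $r_i$ along a single $s_i$–$t_i$ path chosen from the set $\Pi_i$ of $s_i$–$t_i$ paths in $G$ (non-splittable, atomic routing). A feasible flow $f$ is a choice of one path $P_i\in\Pi_i$ for each player $i$; for an edge $e$, $f_e=\sum_{i: e\in P_i} r_i$ denotes the total flow on $e$. Each edge $e$ has a congestion function $c_e:\mathbb{R}^+\to\mathbb{R}^+$ which is affine, $c_e(x)=a_e x+b_e$, and a unit-price function $u_e:\mathbb{R}^+\to\mathbb{R}^+$. The cost to player $i$ of a path $P$ under flow $f$ is $t^i_P(f)=\sum_{e\in P}\bigl(c_e(f_e)+u_e(r_i)\bigr)$. Call $f$ an equilibrium flow if for every player $i$ and every pair $P,\tilde P\in\Pi_i$ with $P$ the path used by $i$ in $f$, one has $t^i_P(f)\le t^i_{\tilde P}(\tilde f)$, where $\tilde f$ is the flow identical to $f$ except that player $i$ routes its $r_i$ units along $\tilde P$ instead of $P$. Then at least one equilibrium flow exists.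
   Context: The per-unit price $u_e(r_i)$ is interpreted as $F_e(r_i)/r_i$, where $F_e(r_i)$ is the amount charged by the Internet service provider owning edge $e$ for routing $r_i$ units of player $i$'s flow; it depends only on player $i$'s own flow amount, while the congestion term $c_e$ depends on the total flow $f_e$ on the edge. *)

theory Defs
  imports "HOL-Analysis.Analysis"
begin

definition path_edges :: "'v list \<Rightarrow> ('v \<times> 'v) set" where
  "path_edges p = set (zip p (tl p))"

definition st_paths :: "'v set \<Rightarrow> ('v \<times> 'v) set \<Rightarrow> 'v \<Rightarrow> 'v \<Rightarrow> 'v list set" where
  "st_paths V E s t = {p. p \<noteq> [] \<and> hd p = s \<and> last p = t \<and> distinct p
      \<and> set p \<subseteq> V \<and> path_edges p \<subseteq> E}"

definition feasible ::
  "'v set \<Rightarrow> ('v \<times> 'v) set \<Rightarrow> nat \<Rightarrow> (nat \<Rightarrow> 'v) \<Rightarrow> (nat \<Rightarrow> 'v) \<Rightarrow> (nat \<Rightarrow> 'v list) \<Rightarrow> bool" where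
  "feasible V E k s t P = (\<forall>i\<in>{1..k}. P i \<in> st_paths V E (s i) (t i))"

definition edge_flow ::
  "nat \<Rightarrow> (nat \<Rightarrow> real) \<Rightarrow> (nat \<Rightarrow> 'v list) \<Rightarrow> ('v \<times> 'v) \<Rightarrow> real" where
  "edge_flow k r P e = (\<Sum>i\<in>{i\<in>{1..k}. e \<in> path_edges (P i)}. r i)"

definition path_cost ::
  "nat \<Rightarrow> (nat \<Rightarrow> real) \<Rightarrow> (('v \<times> 'v) \<Rightarrow> real) \<Rightarrow> (('v \<times> 'v) \<Rightarrow> real)
   \<Rightarrow> (('v \<times> 'v) \<Rightarrow> real \<Rightarrow> real) \<Rightarrow> nat \<Rightarrow> 'v list \<Rightarrow> (nat \<Rightarrow> 'v list) \<Rightarrow> real" where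
  "path_cost k r a b u i Q P =
     (\<Sum>e\<in>path_edges Q. (a e * edge_flow k r P e + b e) + u e (r i))"

definition equilibrium ::
  "'v set \<Rightarrow> ('v \<times> 'v) set \<Rightarrow> nat \<Rightarrow> (nat \<Rightarrow> 'v) \<Rightarrow> (nat \<Rightarrow> 'v) \<Rightarrow> (nat \<Rightarrow> real)
   \<Rightarrow> (('v \<times> 'v) \<Rightarrow> real) \<Rightarrow> (('v \<times> 'v) \<Rightarrow> real) \<Rightarrow> (('v \<times> 'v) \<Rightarrow> real \<Rightarrow> real)
   \<Rightarrow> (nat \<Rightarrow> 'v list) \<Rightarrow> bool" where
  "equilibrium V E k s t r a b u P =
     (feasible V E k s t P \<and>
      (\<forall>i\<in>{1..k}. \<forall>Q\<in>st_paths V E (s i) (t i).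
          path_cost k r a b u i (P i) P \<le> path_cost k r a b u i Q (P(i := Q))))"

end

theory Submission
  imports Defs
begin

text \<open>The game has an exact weighted potential: a unilateral switch of player \<open>i\<close>
  changes the potential by \<open>r i\<close> times the change of \<open>i\<close>'s own cost. Since there are
  only finitely many feasible flows, a flow minimising the potential exists, and no
  player can lower its cost by deviating from it.\<close>

lemma finite_st_paths:
  assumes "finite V"
  shows "finite (st_paths V E s t)"
proof (rule finite_subset)
  show "st_paths V E s t \<subseteq> {p. set p \<subseteq> V \<and> distinct p}"
    unfolding st_paths_def by auto
qed (rule finite_subset_distinct[OF assms])

lemma sum_fun_upd_strategy:
  fixes g :: "'i \<Rightarrow> 'p \<Rightarrow> 'a::ab_group_add"
  assumes "finite I" "i \<in> I"
  shows "(\<Sum>j\<in>I. g j ((P(i := Q)) j)) = (\<Sum>j\<in>I. g j (P j)) - g i (P i) + g i Q"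
proof -
  have "(\<Sum>j\<in>I - {i}. g j ((P(i := Q)) j)) = (\<Sum>j\<in>I - {i}. g j (P j))"
    by (rule sum.cong) auto
  then show ?thesis
    using sum.remove[OF assms, of "\<lambda>j. g j ((P(i := Q)) j)"] sum.remove[OF assms, of "\<lambda>j. g j (P j)"]
    by simp
qed

lemma edge_flow_fun_upd:
  assumes "i \<in> {1..k}"
  shows "edge_flow k w (P(i := Q)) e = edge_flow k w P e
           - (if e \<in> path_edges (P i) then w i else 0) + (if e \<in> path_edges Q then w i else 0)"
proof -
  have "edge_flow k w P' e = (\<Sum>j\<in>{1..k}. if e \<in> path_edges (P' j) then w j else 0)" for P'
    unfolding edge_flow_def by (rule sum.inter_filter) simp
  then show ?thesis
    using sum_fun_upd_strategy[OF _ assms, of "\<lambda>j p. if e \<in> path_edges p then w j else 0"] by simp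
qed

text \<open>The congestion part is \<open>\<Sum>\<^sub>e a\<^sub>e \<Sum>\<^bsub>j \<le> j'\<^esub> r\<^sub>j r\<^sub>j\<^sub>' + b\<^sub>e f\<^sub>e\<close>, the sum over unordered pairs
  (with repetition) of players using \<open>e\<close>, written as \<open>a\<^sub>e (f\<^sub>e\<^sup>2 + \<Sum>\<^sub>j r\<^sub>j\<^sup>2) / 2\<close>.
  The price part weights each player's own price by its flow, matching the factor
  \<open>r i\<close> in the potential difference.\<close>

definition affine_potential ::
  "('v \<times> 'v) set \<Rightarrow> nat \<Rightarrow> (nat \<Rightarrow> real) \<Rightarrow> (('v \<times> 'v) \<Rightarrow> real) \<Rightarrow> (('v \<times> 'v) \<Rightarrow> real)
   \<Rightarrow> (('v \<times> 'v) \<Rightarrow> real \<Rightarrow> real) \<Rightarrow> (nat \<Rightarrow> 'v list) \<Rightarrow> real" where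
  "affine_potential E k r a b u P =
     (\<Sum>e\<in>E. a e * (edge_flow k r P e ^ 2 + edge_flow k (\<lambda>j. r j ^ 2) P e) / 2
              + b e * edge_flow k r P e)
     + (\<Sum>j\<in>{1..k}. r j * (\<Sum>e\<in>path_edges (P j). u e (r j)))"

lemma affine_potential_fun_upd:
  fixes P :: "nat \<Rightarrow> 'v list"
  assumes i: "i \<in> {1..k}" and "finite E"
    and PE: "path_edges (P i) \<subseteq> E" and QE: "path_edges Q \<subseteq> E"
  shows "affine_potential E k r a b u (P(i := Q)) - affine_potential E k r a b u P
           = r i * (path_cost k r a b u i Q (P(i := Q)) - path_cost k r a b u i (P i) P)"
proof -
  let ?P' = "P(i := Q)" and ?f = "edge_flow k r"
  define \<phi> where "\<phi> P' e = a e * (?f P' e ^ 2 + edge_flow k (\<lambda>j. r j ^ 2) P' e) / 2 + b e * ?f P' e"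
    for P' e
  define c where "c p P' = (\<Sum>e\<in>path_edges p. a e * ?f P' e + b e)" for p P'
  have c_as_sum_E: "c p P' = (\<Sum>e\<in>E. if e \<in> path_edges p then a e * ?f P' e + b e else 0)"
    if "path_edges p \<subseteq> E" for p P'
    using sum.inter_restrict[OF \<open>finite E\<close>, of "\<lambda>e. a e * ?f P' e + b e" "path_edges p"] that
    unfolding c_def by (simp add: Int_absorb1)
  have edge: "\<phi> ?P' e - \<phi> P e = r i * ((if e \<in> path_edges Q then a e * ?f ?P' e + b e else 0)
                                    - (if e \<in> path_edges (P i) then a e * ?f P e + b e else 0))" for e
    unfolding \<phi>_def edge_flow_fun_upd[OF i, of _ P Q]
    by (cases "e \<in> path_edges (P i)"; cases "e \<in> path_edges Q")
      (simp_all add: field_simps power2_eq_square)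
  have congestion: "(\<Sum>e\<in>E. \<phi> ?P' e) - (\<Sum>e\<in>E. \<phi> P e) = r i * (c Q ?P' - c (P i) P)"
    by (simp add: sum_subtractf[symmetric] edge sum_distrib_left[symmetric]
        c_as_sum_E[OF PE] c_as_sum_E[OF QE])
  have prices: "(\<Sum>j\<in>{1..k}. r j * (\<Sum>e\<in>path_edges (?P' j). u e (r j)))
      = (\<Sum>j\<in>{1..k}. r j * (\<Sum>e\<in>path_edges (P j). u e (r j)))
        - r i * (\<Sum>e\<in>path_edges (P i). u e (r i)) + r i * (\<Sum>e\<in>path_edges Q. u e (r i))"
    by (rule sum_fun_upd_strategy[OF _ i]) simp
  have cost: "path_cost k r a b u i p P' = c p P' + (\<Sum>e\<in>path_edges p. u e (r i))" for p P'
    unfolding path_cost_def c_def by (simp add: sum.distrib)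
  show ?thesis
    using congestion prices unfolding affine_potential_def cost \<phi>_def
    by (simp add: algebra_simps)
qed

lemma equilibrium_if_potential_locally_minimal:
  assumes "finite E" "feasible V E k s t P" and r_pos: "\<forall>i\<in>{1..k}. r i > 0"
    and minimal: "\<forall>i\<in>{1..k}. \<forall>Q\<in>st_paths V E (s i) (t i).
                    affine_potential E k r a b u P \<le> affine_potential E k r a b u (P(i := Q))"
  shows "equilibrium V E k s t r a b u P"
  unfolding equilibrium_def
proof (intro conjI ballI)
  fix i Q assume i: "i \<in> {1..k}" and Q: "Q \<in> st_paths V E (s i) (t i)"
  have "path_edges (P i) \<subseteq> E" "path_edges Q \<subseteq> E"
    using assms(2) i Q unfolding feasible_def st_paths_def by auto
  then have "0 \<le> r i * (path_cost k r a b u i Q (P(i := Q)) - path_cost k r a b u i (P i) P)"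
    using minimal i Q by (simp flip: affine_potential_fun_upd[OF i \<open>finite E\<close>])
  moreover have "r i > 0" using r_pos i by blast
  ultimately show "path_cost k r a b u i (P i) P \<le> path_cost k r a b u i Q (P(i := Q))"
    by (simp add: zero_le_mult_iff)
qed (fact assms(2))

theorem theorem1:
  fixes V :: "'v set" and E :: "('v \<times> 'v) set" and k :: nat
    and s t :: "nat \<Rightarrow> 'v" and r :: "nat \<Rightarrow> real"
    and a b :: "('v \<times> 'v) \<Rightarrow> real" and u :: "('v \<times> 'v) \<Rightarrow> real \<Rightarrow> real"
  assumes "finite V" and "E \<subseteq> V \<times> V"
    and "\<forall>i\<in>{1..k}. s i \<in> V \<and> t i \<in> V"
    and "\<forall>i\<in>{1..k}. r i > 0"
    and "\<forall>i\<in>{1..k}. st_paths V E (s i) (t i) \<noteq> {}"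
    and "\<forall>e\<in>E. \<forall>x>0. a e * x + b e > 0"
    and "\<forall>e\<in>E. \<forall>x>0. u e x > 0"
  shows "\<exists>P. equilibrium V E k s t r a b u P"
proof -
  have "finite E" using assms(1,2) by (meson finite_SigmaI finite_subset)
  define S where "S = (\<Pi>\<^sub>E i\<in>{1..k}. st_paths V E (s i) (t i))"
  have "finite S" unfolding S_def by (intro finite_PiE finite_st_paths assms(1)) simp
  have "S \<noteq> {}" unfolding S_def PiE_eq_empty_iff using assms(5) by blast
  define P where "P = arg_min_on (affine_potential E k r a b u) S"
  have P: "P \<in> S"
    unfolding P_def using \<open>finite S\<close> \<open>S \<noteq> {}\<close> by (rule arg_min_if_finite)
  have minimal: "affine_potential E k r a b u P \<le> affine_potential E k r a b u P'" if "P' \<in> S" for P'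
    unfolding P_def using \<open>finite S\<close> \<open>S \<noteq> {}\<close> that by (rule arg_min_least)
  have "P(i := Q) \<in> S" if "i \<in> {1..k}" "Q \<in> st_paths V E (s i) (t i)" for i Q
    using P that unfolding S_def by (auto simp: PiE_iff extensional_def)
  moreover have "feasible V E k s t P" using P unfolding S_def feasible_def by auto
  ultimately have "equilibrium V E k s t r a b u P"
    using equilibrium_if_potential_locally_minimal[OF \<open>finite E\<close> _ assms(4)] minimal by simp
  then show ?thesis by blast
qed

end
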